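(* Let $\mathcal{R}$ be a right amenable cell space with finite stabiliser $G_0$, let $Q$ be a finite set with at least two elements, and let $\mathcal{F}=(F_i)_{i\in I}$ be a right Følner net in $\mathcal{R}$. Let $X\subseteq Q^M$ be $\triangleright$-invariant, and let $E$ be a nonempty finite subset of $G/G_0$ such that $\pi_{m_0\triangleleft E}(X)\subsetneq Q^{m_0\triangleleft E}$. Then $\mathrm{h}_{\mathcal{F}}(X)<\log|Q|$.
   Context: A cell space $\mathcal{R}$ consists of a group $G$ acting transitively on the left on a nonempty set $M$ via $\triangleright$, a point $m_0\in M$ and a family $(g_{m_0,m})_{m\in M}$ in $G$ with $g_{m_0,m}\triangleright m_0=m$. $G_0$ is the stabiliser of $m_0$ and $G/G_0$ the set of left cosets. The right semi-action $\triangleleft\colon M\times G/G_0\to M$ is $m\triangleleft gG_0=g_{m_0,m}g\triangleright m_0$; $m\triangleleft E=\{m\triangleleft e:e\in E\}$. $\mathcal{R}$ is right amenable if there is a finitely additive probability measure $\mu$ on the power set of $M$ such that $\mu(\{a\triangleleft\mathfrak{g}:a\in A\})=\mu(A)$ whenever $\mathfrak{g}\in G/G_0$, $A\subseteq M$ and $m\mapsto m\triangleleft\mathfrak{g}$ is injective on $A$. A right Følner net in $\mathcal{R}$ is a net $(F_i)_{i\in I}$ (over a directed set) of nonempty finite subsets of $M$ with $\lim_{i}\frac{|F_i\setminus\{m: m\triangleleft\mathfrak{g}\in F_i\}|}{|F_i|}=0$ for every $\mathfrak{g}\in G/G_0$. $G$ acts on patterns by $(g\triangleright p)\colon g\triangleright\mathrm{dom}(p)\to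 Q$, $m\mapsto p(g^{-1}\triangleright m)$ for $p\colon A\to Q$, $A\subseteq M$; $X\subseteq Q^M$ is $\triangleright$-invariant if $g\triangleright X\subseteq X$ for all $g\in G$. For $A\subseteq M$, $\pi_A\colon Q^M\to Q^A$ is restriction; $\mathrm{h}_{\mathcal{F}}(X)=\limsup_{i\in I}\frac{\log|\pi_{F_i}(X)|}{|F_i|}$. *)

theory Defs
  imports Complex_Main "HOL-Algebra.Group_Action" "HOL-Algebra.Left_Coset"
    "HOL-Library.FuncSet" "HOL-Library.Liminf_Limsup" "HOL-Library.Extended_Real"
begin

text \<open>A cell space: a group G acting transitively on the left on the set M (here the whole
  type 'm) via act, a point m0 and coordinates gm with (gm m) acting on m0 giving m.\<close>
definition cell_space :: "('g, 'b) monoid_scheme \<Rightarrow> ('g \<Rightarrow> 'm \<Rightarrow> 'm) \<Rightarrow> 'm \<Rightarrow> ('m \<Rightarrow> 'g) \<Rightarrow> bool" where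
  "cell_space G act m0 gm \<longleftrightarrow>
     transitive_action G (UNIV :: 'm set) act \<and>
     (\<forall>m. gm m \<in> carrier G \<and> act (gm m) m0 = m)"

definition stab0 :: "('g, 'b) monoid_scheme \<Rightarrow> ('g \<Rightarrow> 'm \<Rightarrow> 'm) \<Rightarrow> 'm \<Rightarrow> 'g set" where
  "stab0 G act m0 = stabilizer G act m0"

definition cosets0 :: "('g, 'b) monoid_scheme \<Rightarrow> ('g \<Rightarrow> 'm \<Rightarrow> 'm) \<Rightarrow> 'm \<Rightarrow> 'g set set" where
  "cosets0 G act m0 = lcosets\<^bsub>G\<^esub> (stab0 G act m0)"

text \<open>Right semi-action  m \<triangleleft> gG0 = (gm m \<otimes> g) \<triangleright> m0  (for a coset c we pick a
  representative g; the value does not depend on the choice).\<close>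
definition semi_act :: "('g, 'b) monoid_scheme \<Rightarrow> ('g \<Rightarrow> 'm \<Rightarrow> 'm) \<Rightarrow> 'm \<Rightarrow> ('m \<Rightarrow> 'g)
    \<Rightarrow> 'm \<Rightarrow> 'g set \<Rightarrow> 'm" where
  "semi_act G act m0 gm m c =
     act (gm m \<otimes>\<^bsub>G\<^esub> (SOME g. g \<in> carrier G \<and> c = g <#\<^bsub>G\<^esub> stab0 G act m0)) m0"

definition right_amenable :: "('g, 'b) monoid_scheme \<Rightarrow> ('g \<Rightarrow> 'm \<Rightarrow> 'm) \<Rightarrow> 'm \<Rightarrow> ('m \<Rightarrow> 'g) \<Rightarrow> bool" where
  "right_amenable G act m0 gm \<longleftrightarrow>
     (\<exists>\<mu> :: 'm set \<Rightarrow> real.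
        (\<forall>A. \<mu> A \<ge> 0) \<and> \<mu> UNIV = 1 \<and>
        (\<forall>A B. A \<inter> B = {} \<longrightarrow> \<mu> (A \<union> B) = \<mu> A + \<mu> B) \<and>
        (\<forall>c \<in> cosets0 G act m0. \<forall>A. inj_on (\<lambda>m. semi_act G act m0 gm m c) A \<longrightarrow>
            \<mu> ((\<lambda>m. semi_act G act m0 gm m c) ` A) = \<mu> A))"

definition directed_set :: "'i set \<Rightarrow> ('i \<Rightarrow> 'i \<Rightarrow> bool) \<Rightarrow> bool" where
  "directed_set I rel \<longleftrightarrow> I \<noteq> {} \<and> (\<forall>i\<in>I. rel i i) \<and>
     (\<forall>i\<in>I. \<forall>j\<in>I. \<forall>k\<in>I. rel i j \<longrightarrow> rel j k \<longrightarrow> rel i k) \<and>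
     (\<forall>i\<in>I. \<forall>j\<in>I. \<exists>k\<in>I. rel i k \<and> rel j k)"

definition net_filter :: "'i set \<Rightarrow> ('i \<Rightarrow> 'i \<Rightarrow> bool) \<Rightarrow> 'i filter" where
  "net_filter I rel = (INF i\<in>I. principal {j\<in>I. rel i j})"

definition right_foelner_net :: "('g, 'b) monoid_scheme \<Rightarrow> ('g \<Rightarrow> 'm \<Rightarrow> 'm) \<Rightarrow> 'm \<Rightarrow> ('m \<Rightarrow> 'g)
    \<Rightarrow> 'i set \<Rightarrow> ('i \<Rightarrow> 'i \<Rightarrow> bool) \<Rightarrow> ('i \<Rightarrow> 'm set) \<Rightarrow> bool" where
  "right_foelner_net G act m0 gm I rel F \<longleftrightarrow>
     directed_set I rel \<and>
     (\<forall>i\<in>I. finite (F i) \<and> F i \<noteq> {}) \<and>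
     (\<forall>c \<in> cosets0 G act m0.
        ((\<lambda>i. real (card (F i - {m. semi_act G act m0 gm m c \<in> F i})) / real (card (F i)))
           \<longlongrightarrow> 0) (net_filter I rel))"

definition cfg_act :: "('g, 'b) monoid_scheme \<Rightarrow> ('g \<Rightarrow> 'm \<Rightarrow> 'm) \<Rightarrow> 'g \<Rightarrow> ('m \<Rightarrow> 'q) \<Rightarrow> ('m \<Rightarrow> 'q)" where
  "cfg_act G act g x = (\<lambda>m. x (act (inv\<^bsub>G\<^esub> g) m))"

definition act_invariant :: "('g, 'b) monoid_scheme \<Rightarrow> ('g \<Rightarrow> 'm \<Rightarrow> 'm) \<Rightarrow> ('m \<Rightarrow> 'q) set \<Rightarrow> bool" where
  "act_invariant G act X \<longleftrightarrow> (\<forall>g\<in>carrier G. cfg_act G act g ` X \<subseteq> X)"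

text \<open>Restriction pi_A : Q^M \<rightarrow> Q^A (patterns are extensional functions on A).\<close>
definition proj :: "'m set \<Rightarrow> ('m \<Rightarrow> 'q) \<Rightarrow> ('m \<Rightarrow> 'q)" where
  "proj A x = restrict x A"

definition entropy :: "'i set \<Rightarrow> ('i \<Rightarrow> 'i \<Rightarrow> bool) \<Rightarrow> ('i \<Rightarrow> 'm set) \<Rightarrow> ('m \<Rightarrow> 'q) set \<Rightarrow> ereal" where
  "entropy I rel F X =
     Limsup (net_filter I rel) (\<lambda>i. ereal (ln (real (card (proj (F i) ` X))) / real (card (F i))))"

end

theory Submission
  imports Defs
begin

text \<open>Let \<open>P = m\<^sub>0 \<triangleleft> E\<close>. The tile \<open>m \<triangleleft> E\<close> of every cell \<open>m\<close> is a translate of \<open>P\<close>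
  by an element of \<open>G\<close>, so by invariance of \<open>X\<close> each tile carries at most \<open>|Q|^|P| - 1\<close>
  patterns; as \<open>G\<^sub>0\<close> is finite, each tile meets at most \<open>N = |E|\<^sup>2 |G\<^sub>0|\<close> tiles. Eventually
  at least half of the cells of a Foelner set \<open>F\<close> have their whole tile inside \<open>F\<close>, and a
  greedy choice among them yields at least \<open>|F| / (2N)\<close> pairwise disjoint tiles in \<open>F\<close>.
  Counting patterns tile by tile gives
  \<open>log |\<pi>\<^sub>F(X)| / |F| \<le> log |Q| - (|P| log |Q| - log (|Q|^|P| - 1)) / (2N)\<close>,
  a bound independent of \<open>F\<close> and strictly below \<open>log |Q|\<close>.\<close>

lemma finite_proj_image:
  fixes X :: "('m \<Rightarrow> 'q::finite) set"
  assumes "finite A"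
  shows "finite (proj A ` X)"
proof (rule finite_subset)
  show "proj A ` X \<subseteq> A \<rightarrow>\<^sub>E UNIV" by (auto simp: proj_def)
qed (use assms in \<open>simp add: finite_PiE\<close>)

lemma card_proj_image_le_power:
  fixes X :: "('m \<Rightarrow> 'q::finite) set"
  assumes "finite A"
  shows "card (proj A ` X) \<le> card (UNIV :: 'q set) ^ card A"
proof -
  have "card (proj A ` X) \<le> card (A \<rightarrow>\<^sub>E (UNIV :: 'q set))"
    using assms by (intro card_mono) (auto simp: finite_PiE proj_def)
  then show ?thesis using assms by (simp add: card_PiE)
qed

lemma card_proj_image_Un_le:
  fixes X :: "('m \<Rightarrow> 'q::finite) set"
  assumes "finite A" "finite B"
  shows "card (proj (A \<union> B) ` X) \<le> card (proj A ` X) * card (proj B ` X)"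
proof -
  let ?split = "\<lambda>u. (restrict u A, restrict u B)"
  have "inj_on ?split (proj (A \<union> B) ` X)"
    by (rule inj_onI) (auto simp: proj_def restrict_def fun_eq_iff split: if_splits)
  moreover have "?split ` proj (A \<union> B) ` X \<subseteq> proj A ` X \<times> proj B ` X"
    by (auto simp: proj_def restrict_def fun_eq_iff)
  ultimately have "card (proj (A \<union> B) ` X) \<le> card (proj A ` X \<times> proj B ` X)"
    using assms by (intro card_inj_on_le) (auto intro: finite_proj_image)
  then show ?thesis by (simp add: card_cartesian_product)
qed

lemma card_proj_image_le_disjoint_tiles:
  fixes X :: "('m \<Rightarrow> 'q::finite) set" and T :: "'a \<Rightarrow> 'm set"
  assumes "finite C" "finite A" "\<And>c. c \<in> C \<Longrightarrow> T c \<subseteq> A"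
    and "\<And>a b. a \<in> C \<Longrightarrow> b \<in> C \<Longrightarrow> a \<noteq> b \<Longrightarrow> T a \<inter> T b = {}"
    and "\<And>c. c \<in> C \<Longrightarrow> card (proj (T c) ` X) \<le> r"
    and "\<And>c. c \<in> C \<Longrightarrow> card (T c) = p"
  shows "card (proj A ` X) \<le> card (UNIV :: 'q set) ^ (card A - p * card C) * r ^ card C"
  using assms
proof (induction C arbitrary: A rule: finite_induct)
  case empty
  then show ?case by (simp add: card_proj_image_le_power)
next
  case (insert c C)
  let ?R = "A - T c"
  have T_sub: "T c \<subseteq> A" using insert.prems(2) by simp
  have fin_R: "finite ?R" and fin_T: "finite (T c)"
    using insert.prems(1) T_sub finite_subset by auto
  have "card (proj ?R ` X) \<le> card (UNIV :: 'q set) ^ (card ?R - p * card C) * r ^ card C"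
  proof (rule insert.IH[OF fin_R])
    fix c' assume "c' \<in> C"
    then have "T c' \<subseteq> A" and "T c' \<inter> T c = {}"
      using insert.prems(2)[of c'] insert.prems(3)[of c' c] insert.hyps(2) by auto
    then show "T c' \<subseteq> ?R" by blast
  qed (use insert.prems in auto)
  moreover have "card ?R = card A - p"
    using insert.prems(5) fin_T T_sub by (simp add: card_Diff_subset)
  moreover have "card (proj A ` X) \<le> card (proj ?R ` X) * card (proj (T c) ` X)"
    using card_proj_image_Un_le[OF fin_R fin_T, of X] T_sub by (simp add: Un_absorb2)
  ultimately have "card (proj A ` X) \<le> card (UNIV :: 'q set) ^ (card A - p - p * card C) * r ^ card C * r"
    using insert.prems(4)[of c] by (auto intro: order.trans mult_mono)
  then show ?case
    using insert.hyps by (simp add: diff_diff_left algebra_simps)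
qed

lemma independent_subset_card_ge:
  fixes D :: "'a set"
  assumes "finite D" "\<And>a b. adj a b \<Longrightarrow> adj b a" "\<And>a. a \<in> D \<Longrightarrow> adj a a"
    and "\<And>a. a \<in> D \<Longrightarrow> card {b\<in>D. adj a b} \<le> N"
  shows "\<exists>C\<subseteq>D. (\<forall>a\<in>C. \<forall>b\<in>C. a \<noteq> b \<longrightarrow> \<not> adj a b) \<and> card D \<le> N * card C"
  using assms
proof (induction "card D" arbitrary: D rule: less_induct)
  case less
  show ?case
  proof (cases "D = {}")
    case False
    then obtain a where a: "a \<in> D" by auto
    let ?nbh = "{b\<in>D. adj a b}"
    have "card (D - ?nbh) < card D"
      using a less.prems(1,3) by (intro psubset_card_mono) auto
    moreover have "card {b \<in> D - ?nbh. adj x b} \<le> N" if "x \<in> D - ?nbh" for x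
    proof -
      have "card {b \<in> D - ?nbh. adj x b} \<le> card {b\<in>D. adj x b}"
        using less.prems(1) by (intro card_mono) auto
      then show ?thesis using less.prems(4) that by force
    qed
    ultimately obtain C where C: "C \<subseteq> D - ?nbh" "\<forall>x\<in>C. \<forall>y\<in>C. x \<noteq> y \<longrightarrow> \<not> adj x y"
      "card (D - ?nbh) \<le> N * card C"
      using less.hyps[of "D - ?nbh"] less.prems(1-3) by auto
    have "finite C" using C(1) less.prems(1) finite_subset by blast
    have "a \<notin> C" using C(1) less.prems(3)[OF a] by blast
    have "D = ?nbh \<union> (D - ?nbh)" by blast
    then have "card D \<le> card ?nbh + card (D - ?nbh)" by (metis card_Un_le)
    also have "\<dots> \<le> N * card (insert a C)"
      using less.prems(4)[OF a] C(3) \<open>finite C\<close> \<open>a \<notin> C\<close> by simp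
    finally show ?thesis
      using C a less.prems(2) by (intro exI[of _ "insert a C"]) auto
  qed simp
qed

lemma card_overlapping_images_le:
  fixes f :: "'a \<Rightarrow> 'c \<Rightarrow> 'b"
  assumes "finite E" and fibre: "\<And>c y. c \<in> E \<Longrightarrow> finite {x. f x c = y} \<and> card {x. f x c = y} \<le> K"
  shows "finite {x'. f x ` E \<inter> f x' ` E \<noteq> {}}"
    and "card {x'. f x ` E \<inter> f x' ` E \<noteq> {}} \<le> card E * card E * K"
proof -
  let ?U = "\<Union>y\<in>f x ` E. \<Union>c\<in>E. {x'. f x' c = y}"
  have sub: "{x'. f x ` E \<inter> f x' ` E \<noteq> {}} \<subseteq> ?U" by fastforce
  have fin: "finite ?U" using assms by (intro finite_UN_I) auto
  then show "finite {x'. f x ` E \<inter> f x' ` E \<noteq> {}}" using sub finite_subset by blast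
  have "card {x'. f x ` E \<inter> f x' ` E \<noteq> {}} \<le> card ?U" using sub fin by (rule card_mono[rotated])
  also have "\<dots> \<le> (\<Sum>y\<in>f x ` E. \<Sum>c\<in>E. card {x'. f x' c = y})"
    using assms(1) by (intro order.trans[OF card_UN_le] sum_mono card_UN_le) auto
  also have "\<dots> \<le> (\<Sum>y\<in>f x ` E. \<Sum>c\<in>E. K)" using fibre by (intro sum_mono) auto
  also have "\<dots> \<le> card E * card E * K" using card_image_le[OF assms(1), of "f x"] by simp
  finally show "card {x'. f x ` E \<inter> f x' ` E \<noteq> {}} \<le> card E * card E * K" .
qed

lemma eventually_card_le_twice_interior:
  fixes F :: "'i \<Rightarrow> 'm set" and s :: "'m \<Rightarrow> 'c \<Rightarrow> 'm"
  assumes "finite E"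
    and "\<And>c. c \<in> E \<Longrightarrow>
      ((\<lambda>i. real (card (F i - {m. s m c \<in> F i})) / real (card (F i))) \<longlongrightarrow> 0) net"
  shows "eventually (\<lambda>i. card (F i) \<le> 2 * card {m\<in>F i. \<forall>c\<in>E. s m c \<in> F i}) net"
proof -
  define \<epsilon> where "\<epsilon> = 1 / (2 * real (card E))"
  have "eventually (\<lambda>i. \<forall>c\<in>E. real (card (F i - {m. s m c \<in> F i})) / real (card (F i)) < \<epsilon>) net"
  proof (rule eventually_ball_finite[OF assms(1)], intro ballI)
    fix c assume "c \<in> E"
    then have "\<epsilon> > 0" using assms(1) by (auto simp: \<epsilon>_def card_gt_0_iff)
    then show "eventually (\<lambda>i. real (card (F i - {m. s m c \<in> F i})) / real (card (F i)) < \<epsilon>) net"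
      using order_tendstoD(2)[OF assms(2)[OF \<open>c \<in> E\<close>]] by blast
  qed
  then show ?thesis
  proof eventually_elim
    case (elim i)
    let ?n = "card (F i)" and ?D = "{m\<in>F i. \<forall>c\<in>E. s m c \<in> F i}"
    show ?case
    proof (cases "?n = 0")
      case False
      have "real (card (F i - ?D)) \<le> (\<Sum>c\<in>E. real (card (F i - {m. s m c \<in> F i})))"
      proof -
        have "F i - ?D = (\<Union>c\<in>E. F i - {m. s m c \<in> F i})" by auto
        then have "card (F i - ?D) \<le> (\<Sum>c\<in>E. card (F i - {m. s m c \<in> F i}))"
          using card_UN_le[OF assms(1), of "\<lambda>c. F i - {m. s m c \<in> F i}"] by argo
        then show ?thesis by (simp flip: of_nat_sum)
      qed
      also have "\<dots> \<le> (\<Sum>c\<in>E. \<epsilon> * real ?n)"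
      proof (rule sum_mono)
        fix c assume "c \<in> E"
        then have "real (card (F i - {m. s m c \<in> F i})) / real ?n < \<epsilon>" using elim by blast
        then show "real (card (F i - {m. s m c \<in> F i})) \<le> \<epsilon> * real ?n"
          using False by (simp add: field_simps)
      qed
      also have "\<dots> \<le> real ?n / 2" by (simp add: \<epsilon>_def)
      finally have "2 * card (F i - ?D) \<le> ?n" by linarith
      moreover have "?n \<le> card ?D + card (F i - ?D)"
        using card_Un_le[of ?D "F i - ?D"] by (simp add: Un_absorb1)
      ultimately show ?thesis by linarith
    qed simp
  qed
qed

lemma ln_div_le_of_le_tiling_bound:
  fixes q r p n k N L :: nat
  assumes r: "1 \<le> r" "r < q ^ p" and n: "0 < n" "p * k \<le> n" "n \<le> 2 * N * k" and N: "0 < N"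
    and L: "L \<le> q ^ (n - p * k) * r ^ k"
  shows "ln L / n \<le> ln q - (p * ln q - ln r) / (2 * N)"
proof -
  define \<delta> where "\<delta> = p * ln q - ln r"
  have q: "q > 0"
  proof (rule ccontr)
    assume "\<not> 0 < q"
    then have "q ^ p \<le> 1" by (cases p) simp_all
    with r show False by linarith
  qed
  have "ln r < ln (real q ^ p)" using r q by (subst ln_less_cancel_iff) (simp_all flip: of_nat_power)
  then have \<delta>: "\<delta> > 0" using q by (simp add: \<delta>_def ln_realpow)
  have bound_ge_1: "1 \<le> real q ^ (n - p * k) * real r ^ k"
    using q r(1) by (intro mult_ge1_I one_le_power) simp_all
  have "ln L \<le> ln (real q ^ (n - p * k) * real r ^ k)"
  proof (cases "L = 0")
    case False
    then show ?thesis using L q r(1) by (subst ln_le_cancel_iff) (simp_all flip: of_nat_power of_nat_mult)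
  qed (use bound_ge_1 in simp)
  also have "\<dots> = real (n - p * k) * ln q + k * ln r"
    using q r(1) by (simp add: ln_mult ln_realpow)
  also have "\<dots> = n * ln q - k * \<delta>"
    using n(2) by (simp add: \<delta>_def of_nat_diff algebra_simps)
  finally have "ln L / n \<le> ln q - k * \<delta> / n"
    using n(1) by (simp add: field_simps)
  also have "\<dots> \<le> ln q - \<delta> / (2 * N)"
  proof -
    have "real n * \<delta> \<le> 2 * N * k * \<delta>"
      using n(3) \<delta> by (intro mult_right_mono) (simp_all flip: of_nat_mult)
    then show ?thesis using n(1) N by (simp add: field_simps)
  qed
  finally show ?thesis by (simp add: \<delta>_def)
qed

context
  fixes X :: "('m \<Rightarrow> 'q::finite) set" and T :: "'m \<Rightarrow> 'm set" and p N :: nat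
  assumes two_le_card_UNIV: "2 \<le> card (UNIV :: 'q set)"
    and card_tile: "\<And>m. card (T m) = p" and p_pos: "0 < p"
    and card_tile_patterns_less: "\<And>m. card (proj (T m) ` X) < card (UNIV :: 'q set) ^ p"
    and finite_overlapping: "\<And>m. finite {m'. T m \<inter> T m' \<noteq> {}}"
    and card_overlapping_le: "\<And>m. card {m'. T m \<inter> T m' \<noteq> {}} \<le> N"
begin

lemma tile_nonempty: "T m \<noteq> {}"
  using card_tile[of m] p_pos by auto

lemma two_le_card_UNIV_power: "2 \<le> card (UNIV :: 'q set) ^ p"
  using two_le_card_UNIV p_pos self_le_power[of "card (UNIV :: 'q set)" p] by linarith

lemma overlap_bound_pos: "0 < N"
proof -
  have "m \<in> {m'. T m \<inter> T m' \<noteq> {}}" using tile_nonempty by simp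
  then have "0 < card {m'. T m \<inter> T m' \<noteq> {}}"
    using finite_overlapping card_gt_0_iff by blast
  then show ?thesis using card_overlapping_le[of m] by linarith
qed

lemma ln_card_proj_div_le_tiling_bound:
  assumes A: "finite A" "A \<noteq> {}" and interior: "card A \<le> 2 * card {m\<in>A. T m \<subseteq> A}"
  shows "ln (card (proj A ` X)) / card A
    \<le> ln (card (UNIV :: 'q set))
       - (p * ln (card (UNIV :: 'q set)) - ln (card (UNIV :: 'q set) ^ p - 1)) / (2 * N)"
proof -
  let ?q = "card (UNIV :: 'q set)" and ?D = "{m\<in>A. T m \<subseteq> A}"
  obtain C where C: "C \<subseteq> ?D" "\<forall>a\<in>C. \<forall>b\<in>C. a \<noteq> b \<longrightarrow> \<not> T a \<inter> T b \<noteq> {}"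
    and card_D: "card ?D \<le> N * card C"
  proof -
    have "card {b\<in>?D. T a \<inter> T b \<noteq> {}} \<le> N" for a
      by (rule le_trans[OF card_mono[OF finite_overlapping[of a]] card_overlapping_le]) auto
    then have "\<exists>C\<subseteq>?D. (\<forall>a\<in>C. \<forall>b\<in>C. a \<noteq> b \<longrightarrow> \<not> T a \<inter> T b \<noteq> {}) \<and> card ?D \<le> N * card C"
      using A(1) tile_nonempty by (intro independent_subset_card_ge) auto
    then show thesis using that by blast
  qed
  have fin_C: "finite C" by (rule finite_subset[OF C(1)]) (use A(1) in simp)
  have tiles_in_A: "T c \<subseteq> A" if "c \<in> C" for c using C(1) that by auto
  have disjoint: "T a \<inter> T b = {}" if "a \<in> C" "b \<in> C" "a \<noteq> b" for a b using C(2) that by blast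
  have "card (\<Union>c\<in>C. T c) = (\<Sum>c\<in>C. card (T c))"
    using fin_C A(1) tiles_in_A disjoint by (intro card_UN_disjoint) (auto intro: finite_subset)
  also have "\<dots> = p * card C" using card_tile by simp
  finally have "card (\<Union>c\<in>C. T c) = p * card C" .
  moreover have "card (\<Union>c\<in>C. T c) \<le> card A"
    using tiles_in_A A(1) by (intro card_mono) auto
  ultimately have "p * card C \<le> card A" by simp
  moreover have "card A \<le> 2 * N * card C" using interior card_D by simp
  moreover have "card (proj A ` X) \<le> ?q ^ (card A - p * card C) * (?q ^ p - 1) ^ card C"
  proof (rule card_proj_image_le_disjoint_tiles)
    show "card (proj (T c) ` X) \<le> ?q ^ p - 1" for c
      using card_tile_patterns_less[of c] by linarith
  qed (use fin_C A(1) tiles_in_A disjoint card_tile in simp_all)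
  ultimately show ?thesis
    using A overlap_bound_pos two_le_card_UNIV_power
    by (intro ln_div_le_of_le_tiling_bound[where k = "card C"]) (auto simp: card_gt_0_iff)
qed

lemma Limsup_ln_card_proj_less_ln_card:
  fixes F :: "'i \<Rightarrow> 'm set"
  assumes "eventually (\<lambda>i. finite (F i) \<and> F i \<noteq> {} \<and> card (F i) \<le> 2 * card {m\<in>F i. T m \<subseteq> F i}) net"
  shows "Limsup net (\<lambda>i. ereal (ln (card (proj (F i) ` X)) / card (F i)))
    < ereal (ln (card (UNIV :: 'q set)))"
proof -
  let ?q = "card (UNIV :: 'q set)"
  define B where "B = ln ?q - (p * ln ?q - ln (?q ^ p - 1)) / (2 * N)"
  have "Limsup net (\<lambda>i. ereal (ln (card (proj (F i) ` X)) / card (F i))) \<le> ereal B"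
  proof (intro Limsup_bounded eventually_mono[OF assms])
    fix i assume "finite (F i) \<and> F i \<noteq> {} \<and> card (F i) \<le> 2 * card {m\<in>F i. T m \<subseteq> F i}"
    then have "ln (card (proj (F i) ` X)) / card (F i) \<le> B"
      unfolding B_def by (intro ln_card_proj_div_le_tiling_bound) auto
    then show "ereal (ln (card (proj (F i) ` X)) / card (F i)) \<le> ereal B" by simp
  qed
  also have "ereal B < ereal (ln ?q)"
  proof -
    have "ln (real (?q ^ p - 1)) < ln (real (?q ^ p))"
      using two_le_card_UNIV two_le_card_UNIV_power
      by (subst ln_less_cancel_iff) (simp_all del: of_nat_power)
    then show ?thesis using overlap_bound_pos two_le_card_UNIV by (simp add: B_def ln_realpow)
  qed
  finally show ?thesis .
qed

end

lemma card_proj_image_act_le: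
  fixes X :: "('m \<Rightarrow> 'q::finite) set"
  assumes "group G" "act_invariant G act X" "g \<in> carrier G" "finite A"
  shows "card (proj (act g ` A) ` X) \<le> card (proj A ` X)"
proof -
  let ?pull = "\<lambda>u. restrict (\<lambda>z. u (act g z)) A"
  have "inj_on ?pull (proj (act g ` A) ` X)"
  proof (rule inj_onI)
    fix u v assume u: "u \<in> proj (act g ` A) ` X" and v: "v \<in> proj (act g ` A) ` X"
      and pull_eq: "?pull u = ?pull v"
    have "u (act g z) = v (act g z)" if "z \<in> A" for z
      using fun_cong[OF pull_eq, of z] that by simp
    with u v show "u = v" by (auto simp: proj_def restrict_def fun_eq_iff)
  qed
  moreover have "?pull ` proj (act g ` A) ` X \<subseteq> proj A ` X"
  proof
    fix w assume "w \<in> ?pull ` proj (act g ` A) ` X"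
    then obtain x where x: "x \<in> X" and w: "w = ?pull (proj (act g ` A) x)" by blast
    have "w = proj A (cfg_act G act (inv\<^bsub>G\<^esub> g) x)"
      using assms(1,3) by (simp add: w proj_def cfg_act_def group.inv_inv restrict_def fun_eq_iff)
    moreover have "cfg_act G act (inv\<^bsub>G\<^esub> g) x \<in> X"
      using assms(2) group.inv_closed[OF assms(1,3)] x by (auto simp: act_invariant_def)
    ultimately show "w \<in> proj A ` X" by blast
  qed
  ultimately show ?thesis
    using assms(4) by (intro card_inj_on_le finite_proj_image)
qed

lemma cell_space_group_action: "cell_space G act m0 gm \<Longrightarrow> group_action G UNIV act"
  by (simp add: cell_space_def transitive_action_def)

lemma semi_act_cosets0_rep:
  assumes "c \<in> cosets0 G act m0"
  shows "\<exists>g\<in>carrier G. \<forall>m. semi_act G act m0 gm m c = act (gm m \<otimes>\<^bsub>G\<^esub> g) m0"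
proof -
  let ?g = "SOME g. g \<in> carrier G \<and> c = g <#\<^bsub>G\<^esub> stab0 G act m0"
  have "\<exists>g. g \<in> carrier G \<and> c = g <#\<^bsub>G\<^esub> stab0 G act m0"
    using assms by (auto simp: cosets0_def LCOSETS_def)
  then have "?g \<in> carrier G" by (rule someI2_ex) simp
  then show ?thesis by (auto simp: semi_act_def)
qed

lemma semi_act_image_translateE:
  assumes "cell_space G act m0 gm" "E \<subseteq> cosets0 G act m0"
  obtains h where "h \<in> carrier G"
    "semi_act G act m0 gm m ` E = act h ` semi_act G act m0 gm m' ` E"
proof -
  interpret group_action G UNIV act using assms(1) by (rule cell_space_group_action)
  interpret group G using group_hom group_hom.axioms(1) by blast
  have gm: "gm x \<in> carrier G" for x using assms(1) by (simp add: cell_space_def)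
  let ?h = "gm m \<otimes>\<^bsub>G\<^esub> inv\<^bsub>G\<^esub> gm m'"
  have "semi_act G act m0 gm m c = act ?h (semi_act G act m0 gm m' c)" if "c \<in> E" for c
  proof -
    have "c \<in> cosets0 G act m0" using assms(2) \<open>c \<in> E\<close> by blast
    then obtain g where g: "g \<in> carrier G" "\<And>m. semi_act G act m0 gm m c = act (gm m \<otimes>\<^bsub>G\<^esub> g) m0"
      using semi_act_cosets0_rep[where gm = gm] by blast
    have "act ?h (act (gm m' \<otimes>\<^bsub>G\<^esub> g) m0) = act (gm m) (act (inv\<^bsub>G\<^esub> gm m') (act (gm m') (act g m0)))"
      using gm g(1) by (simp add: composition_rule)
    also have "\<dots> = act (gm m \<otimes>\<^bsub>G\<^esub> g) m0"
      using gm g(1) by (simp add: orbit_sym_aux composition_rule)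
    finally show ?thesis by (simp add: g(2))
  qed
  then have "semi_act G act m0 gm m ` E = act ?h ` semi_act G act m0 gm m' ` E"
    unfolding image_image by (rule image_cong[OF refl])
  then show thesis using gm by (intro that[of ?h] m_closed inv_closed)
qed

lemma card_semi_act_image_eq:
  assumes "cell_space G act m0 gm" "E \<subseteq> cosets0 G act m0"
  shows "card (semi_act G act m0 gm m ` E) = card (semi_act G act m0 gm m' ` E)"
proof -
  interpret group_action G UNIV act using assms(1) by (rule cell_space_group_action)
  obtain h where h: "h \<in> carrier G" and "semi_act G act m0 gm m ` E = act h ` semi_act G act m0 gm m' ` E"
    using semi_act_image_translateE[OF assms] by blast
  then show ?thesis using card_image[OF inj_on_subset[OF inj_prop[OF h] subset_UNIV]] by simp
qed

lemma card_proj_semi_act_image_le: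
  fixes X :: "('m \<Rightarrow> 'q::finite) set"
  assumes "cell_space G act m0 gm" "E \<subseteq> cosets0 G act m0" "finite E" "act_invariant G act X"
  shows "card (proj (semi_act G act m0 gm m ` E) ` X) \<le> card (proj (semi_act G act m0 gm m' ` E) ` X)"
proof -
  interpret group_action G UNIV act using assms(1) by (rule cell_space_group_action)
  obtain h where "h \<in> carrier G" "semi_act G act m0 gm m ` E = act h ` semi_act G act m0 gm m' ` E"
    using semi_act_image_translateE[OF assms(1,2)] by blast
  moreover have "group G" using group_hom group_hom.axioms(1) by blast
  ultimately show ?thesis using assms(3,4) by (simp add: card_proj_image_act_le)
qed

lemma semi_act_fibre_finite_card_le:
  assumes "cell_space G act m0 gm" "c \<in> cosets0 G act m0" "finite (stab0 G act m0)"
  shows "finite {m. semi_act G act m0 gm m c = y} \<and> card {m. semi_act G act m0 gm m c = y} \<le> card (stab0 G act m0)"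
proof (cases "\<exists>m. semi_act G act m0 gm m c = y")
  case True
  interpret group_action G UNIV act using assms(1) by (rule cell_space_group_action)
  interpret group G using group_hom group_hom.axioms(1) by blast
  obtain g where g: "g \<in> carrier G" "\<And>m. semi_act G act m0 gm m c = act (gm m \<otimes>\<^bsub>G\<^esub> g) m0"
    using semi_act_cosets0_rep[OF assms(2), where gm = gm] by blast
  have gm: "gm x \<in> carrier G" "act (gm x) m0 = x" for x using assms(1) by (simp_all add: cell_space_def)
  obtain m1 where m1: "act (gm m1 \<otimes>\<^bsub>G\<^esub> g) m0 = y" using True g(2) by auto
  let ?Y = "{m. semi_act G act m0 gm m c = y}"
  let ?f = "\<lambda>m. inv\<^bsub>G\<^esub> (gm m1 \<otimes>\<^bsub>G\<^esub> g) \<otimes>\<^bsub>G\<^esub> (gm m \<otimes>\<^bsub>G\<^esub> g)"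
  have "?f ` ?Y \<subseteq> stab0 G act m0"
  proof
    fix h assume "h \<in> ?f ` ?Y"
    then obtain m where "act (gm m \<otimes>\<^bsub>G\<^esub> g) m0 = y" "h = ?f m" using g(2) by auto
    then show "h \<in> stab0 G act m0"
      using gm g(1) m1 by (simp add: stab0_def stabilizer_def composition_rule orbit_sym_aux)
  qed
  moreover have "inj_on ?f ?Y"
  proof (rule inj_onI)
    fix a b assume "?f a = ?f b"
    then have "gm a = gm b" using gm g(1) by simp
    then show "a = b" using gm(2) by metis
  qed
  ultimately show ?thesis using assms(3) by (meson card_inj_on_le inj_on_finite)
qed simp

lemma eventually_mem_net_filter:
  assumes "directed_set I rel"
  shows "eventually (\<lambda>i. i \<in> I) (net_filter I rel)"
proof -
  obtain i0 where "i0 \<in> I" using assms by (auto simp: directed_set_def)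
  then show ?thesis unfolding net_filter_def
    by (rule eventually_INF1) (auto simp: eventually_principal)
qed

lemma right_foelner_net_eventually_interior:
  assumes "right_foelner_net G act m0 gm I rel F" "finite E" "E \<subseteq> cosets0 G act m0"
  shows "eventually (\<lambda>i. finite (F i) \<and> F i \<noteq> {} \<and>
      card (F i) \<le> 2 * card {m\<in>F i. \<forall>c\<in>E. semi_act G act m0 gm m c \<in> F i}) (net_filter I rel)"
proof -
  have "eventually (\<lambda>i. i \<in> I) (net_filter I rel)"
    using assms(1) by (intro eventually_mem_net_filter) (simp add: right_foelner_net_def)
  moreover have "eventually (\<lambda>i. card (F i) \<le> 2 * card {m\<in>F i. \<forall>c\<in>E. semi_act G act m0 gm m c \<in> F i})
      (net_filter I rel)"
    using assms by (intro eventually_card_le_twice_interior) (auto simp: right_foelner_net_def)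
  moreover have "finite (F i) \<and> F i \<noteq> {}" if "i \<in> I" for i
    using assms(1) that by (simp add: right_foelner_net_def)
  ultimately show ?thesis by (auto elim: eventually_elim2)
qed

theorem corollary2:
  fixes G :: "('g, 'b) monoid_scheme" and act :: "'g \<Rightarrow> 'm \<Rightarrow> 'm" and m0 :: 'm
    and gm :: "'m \<Rightarrow> 'g" and I :: "'i set" and rel :: "'i \<Rightarrow> 'i \<Rightarrow> bool"
    and F :: "'i \<Rightarrow> 'm set" and X :: "('m \<Rightarrow> 'q::finite) set" and E :: "'g set set"
  assumes "cell_space G act m0 gm"
    and "right_amenable G act m0 gm"
    and "finite (stab0 G act m0)"
    and "card (UNIV :: 'q set) \<ge> 2"
    and "right_foelner_net G act m0 gm I rel F"
    and "act_invariant G act X"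
    and "E \<noteq> {}" and "finite E" and "E \<subseteq> cosets0 G act m0"
    and "proj ((\<lambda>c. semi_act G act m0 gm m0 c) ` E) ` X
           \<subset> ((\<lambda>c. semi_act G act m0 gm m0 c) ` E) \<rightarrow>\<^sub>E (UNIV :: 'q set)"
  shows "entropy I rel F X < ereal (ln (real (card (UNIV :: 'q set))))"
proof -
  define T where "T m = semi_act G act m0 gm m ` E" for m
  have card_T: "card (T m) = card (T m0)" for m
    unfolding T_def by (rule card_semi_act_image_eq[OF assms(1,9)])
  have patterns: "card (proj (T m) ` X) < card (UNIV :: 'q set) ^ card (T m0)" for m
  proof -
    have "card (proj (T m) ` X) \<le> card (proj (T m0) ` X)"
      unfolding T_def by (rule card_proj_semi_act_image_le[OF assms(1,9,8,6)])
    also have "\<dots> < card (T m0 \<rightarrow>\<^sub>E (UNIV :: 'q set))"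
      using assms(8,10) by (intro psubset_card_mono) (simp_all add: T_def finite_PiE)
    finally show ?thesis using assms(8) by (simp add: card_PiE T_def)
  qed
  have fibre: "finite {m. semi_act G act m0 gm m c = y}
      \<and> card {m. semi_act G act m0 gm m c = y} \<le> card (stab0 G act m0)" if "c \<in> E" for c y
    using semi_act_fibre_finite_card_le[OF assms(1) _ assms(3)] assms(9) that by blast
  have overlapping: "finite {m'. T m \<inter> T m' \<noteq> {}}"
    "card {m'. T m \<inter> T m' \<noteq> {}} \<le> card E * card E * card (stab0 G act m0)" for m
    unfolding T_def using card_overlapping_images_le[OF assms(8) fibre] by simp_all
  have tile_size_pos: "0 < card (T m0)" using assms(7,8) by (simp add: T_def card_gt_0_iff)
  have "{m\<in>F i. \<forall>c\<in>E. semi_act G act m0 gm m c \<in> F i} = {m\<in>F i. T m \<subseteq> F i}" for i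
    by (auto simp: T_def)
  then have foelner: "eventually (\<lambda>i. finite (F i) \<and> F i \<noteq> {} \<and>
      card (F i) \<le> 2 * card {m\<in>F i. T m \<subseteq> F i}) (net_filter I rel)"
    using right_foelner_net_eventually_interior[OF assms(5,8,9)] by simp
  show ?thesis
    unfolding entropy_def
    by (rule Limsup_ln_card_proj_less_ln_card
        [OF assms(4) card_T tile_size_pos patterns overlapping foelner])
qed

end
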